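(* Let $\alpha\neq0$ be real, let $\mathbf{u}=(u_1,u_2)$ and $\mathbf{v}=(-u_1,u_2)$ be constant unit vectors with $u_1u_2\neq0$, and let $\mathbf{f}=(f_1,f_2)\in C_c^2(S^1;\mathbb{D})$. Then $D_\mathbf{u}D_\mathbf{v}\mathcal{L}_\alpha\mathbf{f}=\partial_{\tilde x_1}f_2-\partial_{\tilde x_2}f_1=\tilde\delta^\perp\mathbf{f}$ and $D_\mathbf{u}D_\mathbf{v}\mathcal{T}_\alpha\mathbf{f}=-(\partial_{\tilde x_1}f_1+\partial_{\tilde x_2}f_2)=-\tilde\delta\mathbf{f}$.
   Context: $\mathbb{D}$ is the open unit disc in $\mathbb{R}^2$; $C_c^2(S^1;\mathbb{D})$ is the space of $C^2$ vector fields with compact support in $\mathbb{D}$. $\mathbf{a}^\perp=(-a_2,a_1)$; $D_\mathbf{u}=\mathbf{u}\cdot\nabla$. The weighted longitudinal and transverse V-line transforms are $\mathcal{L}_\alpha\mathbf{f}(\mathbf{x})=-\int_0^\infty\mathbf{u}\cdot\mathbf{f}(\mathbf{x}+t\mathbf{u})\,dt+\alpha\int_0^\infty\mathbf{v}\cdot\mathbf{f}(\mathbf{x}+t\mathbf{v})\,dt$ and $\mathcal{T}_\alpha\mathbf{f}(\mathbf{x})=-\int_0^\infty\mathbf{u}^\perp\cdot\mathbf{f}(\mathbf{x}+t\mathbf{u})\,dt+\alpha\int_0^\infty\mathbf{v}^\perp\cdot\mathbf{f}(\mathbf{x}+t\mathbf{v})\,dt$. The differential operators $\partial_{\tilde x_1}=-(1+\alpha)u_1u_2\partial_{x_1}+(1-\alpha)u_2^2\partial_{x_2}$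 and $\partial_{\tilde x_2}=(1-\alpha)u_1^2\partial_{x_1}-(1+\alpha)u_1u_2\partial_{x_2}$ (derivatives in the linear coordinates $\tilde x$ with $x_1=-(1+\alpha)u_1u_2\tilde x_1+(1-\alpha)u_1^2\tilde x_2$, $x_2=(1-\alpha)u_2^2\tilde x_1-(1+\alpha)u_1u_2\tilde x_2$); $\tilde\delta\mathbf{f}=\partial_{\tilde x_1}f_1+\partial_{\tilde x_2}f_2$, $\tilde\delta^\perp\mathbf{f}=\partial_{\tilde x_1}f_2-\partial_{\tilde x_2}f_1$. *)

theory Defs
  imports "HOL-Analysis.Analysis"
begin

definition dirD :: "real^2 \<Rightarrow> (real^2 \<Rightarrow> real) \<Rightarrow> real^2 \<Rightarrow> real" where
  "dirD w g x = frechet_derivative g (at x) w"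

definition pd :: "2 \<Rightarrow> (real^2 \<Rightarrow> real) \<Rightarrow> real^2 \<Rightarrow> real" where
  "pd i g x = frechet_derivative g (at x) (axis i 1)"

definition C2_field :: "(real^2 \<Rightarrow> real^2) \<Rightarrow> bool" where
  "C2_field f \<longleftrightarrow>
     (\<forall>x. f differentiable (at x)) \<and>
     (\<forall>w x. (\<lambda>y. frechet_derivative f (at y) w) differentiable (at x)) \<and>
     (\<forall>w w'. continuous_on UNIV
        (\<lambda>y. frechet_derivative (\<lambda>z. frechet_derivative f (at z) w) (at y) w'))"

definition Cc2_disc :: "(real^2 \<Rightarrow> real^2) \<Rightarrow> bool" where
  "Cc2_disc f \<longleftrightarrow> C2_field f \<and>
     (\<exists>K. compact K \<and> K \<subseteq> ball 0 1 \<and> (\<forall>x. x \<notin> K \<longrightarrow> f x = 0))"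

definition perp :: "real^2 \<Rightarrow> real^2" where
  "perp a = vector [- (a$2), a$1]"

definition Lalpha :: "real \<Rightarrow> real^2 \<Rightarrow> real^2 \<Rightarrow> (real^2 \<Rightarrow> real^2) \<Rightarrow> real^2 \<Rightarrow> real" where
  "Lalpha \<alpha> u v f x =
     - integral {0..} (\<lambda>t::real. u \<bullet> f (x + t *\<^sub>R u))
     + \<alpha> * integral {0..} (\<lambda>t::real. v \<bullet> f (x + t *\<^sub>R v))"

definition Talpha :: "real \<Rightarrow> real^2 \<Rightarrow> real^2 \<Rightarrow> (real^2 \<Rightarrow> real^2) \<Rightarrow> real^2 \<Rightarrow> real" where
  "Talpha \<alpha> u v f x =
     - integral {0..} (\<lambda>t::real. perp u \<bullet> f (x + t *\<^sub>R u))
     + \<alpha> * integral {0..} (\<lambda>t::real. perp v \<bullet> f (x + t *\<^sub>R v))"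

definition dt1 :: "real \<Rightarrow> real^2 \<Rightarrow> (real^2 \<Rightarrow> real) \<Rightarrow> real^2 \<Rightarrow> real" where
  "dt1 \<alpha> u g x = - (1 + \<alpha>) * (u$1) * (u$2) * pd 1 g x + (1 - \<alpha>) * (u$2)^2 * pd 2 g x"

definition dt2 :: "real \<Rightarrow> real^2 \<Rightarrow> (real^2 \<Rightarrow> real) \<Rightarrow> real^2 \<Rightarrow> real" where
  "dt2 \<alpha> u g x = (1 - \<alpha>) * (u$1)^2 * pd 1 g x - (1 + \<alpha>) * (u$1) * (u$2) * pd 2 g x"

definition tdelta :: "real \<Rightarrow> real^2 \<Rightarrow> (real^2 \<Rightarrow> real^2) \<Rightarrow> real^2 \<Rightarrow> real" where
  "tdelta \<alpha> u f x = dt1 \<alpha> u (\<lambda>y. f y $ 1) x + dt2 \<alpha> u (\<lambda>y. f y $ 2) x"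

definition tdelta_perp :: "real \<Rightarrow> real^2 \<Rightarrow> (real^2 \<Rightarrow> real^2) \<Rightarrow> real^2 \<Rightarrow> real" where
  "tdelta_perp \<alpha> u f x = dt1 \<alpha> u (\<lambda>y. f y $ 2) x - dt2 \<alpha> u (\<lambda>y. f y $ 1) x"

end

(* Both transforms are combinations of ray transforms X_w k (x) = \<integral>_0^\<infinity> k (x + t w) dt of
   the scalar fields p \<bullet> f.  For compactly supported C^1 data, differentiation under the integral
   sign gives D_h X_w k = X_w (D_h k), and the fundamental theorem of calculus along the ray gives
   D_w X_w k = - k.  Hence D_u D_v (- X_u (p \<bullet> f) + \<alpha> X_v (q \<bullet> f)) = p \<bullet> D_v f - \<alpha> q \<bullet> D_u f,
   and writing D_u, D_v in coordinates produces the operators of the tilde coordinates. *)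

theory Submission
  imports Defs
begin

definition ray_transform :: "('a::real_normed_vector \<Rightarrow> 'b::real_normed_vector) \<Rightarrow> 'a \<Rightarrow> 'a \<Rightarrow> 'b"
  where "ray_transform k w x = integral {0..} (\<lambda>t. k (x + t *\<^sub>R w))"

definition compactly_supported_C1 :: "('a::euclidean_space \<Rightarrow> 'b::real_normed_vector) \<Rightarrow> bool"
  where "compactly_supported_C1 k \<longleftrightarrow>
    (\<forall>z. k differentiable (at z)) \<and>
    (\<forall>h. continuous_on UNIV (\<lambda>z. frechet_derivative k (at z) h)) \<and>
    bounded {z. k z \<noteq> 0}"

lemma integral_atLeast_eq_atLeastAtMost:
  fixes F :: "real \<Rightarrow> 'b::banach"
  assumes "a \<le> R" and "\<And>t. R \<le> t \<Longrightarrow> F t = 0"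
  shows "integral {a..} F = integral {a..R} F"
proof -
  have "integral {a..} F = integral {a..} (\<lambda>t. if t \<in> {a..R} then F t else 0)"
    by (rule integral_cong) (use assms in auto)
  also have "\<dots> = integral ({a..R} \<inter> {a..}) F"
    by (rule integral_restrict_Int)
  also have "{a..R} \<inter> {a..} = {a..R}"
    by auto
  finally show ?thesis .
qed

lemma frechet_derivative_locally_zero:
  assumes "open S" "z \<in> S" "\<And>y. y \<in> S \<Longrightarrow> g y = 0"
  shows "frechet_derivative g (at z) = (\<lambda>_. 0)"
proof -
  have "(g has_derivative (\<lambda>_. 0)) (at z)"
    by (rule has_derivative_transform_within_open[of "\<lambda>_. 0" _ _ _ S]) (use assms in auto)
  then show ?thesis
    by (metis frechet_derivative_at)
qed

lemma norm_ray_ge: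
  fixes y w :: "'a::real_normed_vector"
  assumes "w \<noteq> 0" "norm y \<le> c" "(c + r) / norm w \<le> t"
  shows "r \<le> norm (y + t *\<^sub>R w)"
proof (cases "r \<le> 0")
  case False
  then have "c + r \<le> t * norm w"
    using assms by (simp add: pos_divide_le_eq)
  moreover have "\<bar>t\<bar> * norm w \<le> norm (y + t *\<^sub>R w) + norm y"
    using norm_triangle_ineq4[of "y + t *\<^sub>R w" y] by simp
  ultimately show ?thesis
    using assms(2) by (smt (verit) mult_right_mono norm_ge_zero)
qed (simp add: order_trans)

lemma compactly_supported_C1_vanishes_far:
  assumes "compactly_supported_C1 k"
  obtains B where "\<And>z. B < norm z \<Longrightarrow> k z = 0"
    and "\<And>z. B < norm z \<Longrightarrow> frechet_derivative k (at z) = (\<lambda>_. 0)"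
proof -
  obtain B where B: "\<And>z. k z \<noteq> 0 \<Longrightarrow> norm z \<le> B"
    using assms unfolding compactly_supported_C1_def bounded_iff by auto
  have "open {z. B < norm z}"
    by (intro open_Collect_less continuous_intros)
  then have "frechet_derivative k (at z) = (\<lambda>_. 0)" if "B < norm z" for z
    using B that by (intro frechet_derivative_locally_zero) force+
  with B show thesis
    using that by force
qed

lemma compactly_supported_C1_ray_vanishes:
  assumes "compactly_supported_C1 k" "w \<noteq> 0"
  obtains R where "0 \<le> R"
    and "\<And>y t. y \<in> ball x 1 \<Longrightarrow> R \<le> t \<Longrightarrow> k (y + t *\<^sub>R w) = 0"
    and "\<And>y t. y \<in> ball x 1 \<Longrightarrow> R \<le> t \<Longrightarrow> frechet_derivative k (at (y + t *\<^sub>R w)) = (\<lambda>_. 0)"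
proof -
  obtain B where B: "\<And>z. B < norm z \<Longrightarrow> k z = 0"
    "\<And>z. B < norm z \<Longrightarrow> frechet_derivative k (at z) = (\<lambda>_. 0)"
    using compactly_supported_C1_vanishes_far[OF assms(1)] by blast
  define R where "R = max 0 ((norm x + 1 + (B + 1)) / norm w)"
  have "B < norm (y + t *\<^sub>R w)" if "y \<in> ball x 1" "R \<le> t" for y t
  proof -
    have "norm y \<le> norm x + 1"
      using that(1) norm_triangle_ineq2[of y x] by (simp add: dist_norm norm_minus_commute)
    then have "B + 1 \<le> norm (y + t *\<^sub>R w)"
      using that(2) by (intro norm_ray_ge[OF assms(2)]) (auto simp: R_def)
    then show ?thesis by simp
  qed
  with B show thesis
    using that[of R] by (simp add: R_def)
qed

lemma has_derivative_shift:
  assumes "k differentiable (at (y + c))"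
  shows "((\<lambda>y. k (y + c)) has_derivative frechet_derivative k (at (y + c))) (at y within S)"
proof -
  have "((\<lambda>y. y + c) has_derivative (\<lambda>h. h)) (at y within S)"
    by (auto intro!: derivative_eq_intros)
  with assms have "((k \<circ> (\<lambda>y. y + c)) has_derivative frechet_derivative k (at (y + c)) \<circ> (\<lambda>h. h)) (at y within S)"
    by (intro diff_chain_within) (auto intro: has_derivative_at_withinI simp: frechet_derivative_works)
  then show ?thesis
    by (simp add: o_def)
qed

lemma has_vector_derivative_along_line:
  assumes "k differentiable (at (x + t *\<^sub>R w))"
  shows "((\<lambda>t. k (x + t *\<^sub>R w)) has_vector_derivative frechet_derivative k (at (x + t *\<^sub>R w)) w) (at t within S)"
proof -
  have lin: "linear (frechet_derivative k (at (x + t *\<^sub>R w)))"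
    using assms frechet_derivative_works has_derivative_linear by blast
  have "((\<lambda>t. x + t *\<^sub>R w) has_derivative (\<lambda>s. s *\<^sub>R w)) (at t within S)"
    by (auto intro!: derivative_eq_intros)
  with assms have "((k \<circ> (\<lambda>t. x + t *\<^sub>R w)) has_derivative frechet_derivative k (at (x + t *\<^sub>R w)) \<circ> (\<lambda>s. s *\<^sub>R w)) (at t within S)"
    by (intro diff_chain_within) (auto intro: has_derivative_at_withinI simp: frechet_derivative_works)
  then show ?thesis
    unfolding has_vector_derivative_def o_def by (simp add: linear_scale[OF lin])
qed

lemma has_derivative_integral_along_rays:
  fixes k :: "'a::euclidean_space \<Rightarrow> 'b::banach"
  assumes diff: "\<And>z. k differentiable (at z)"
    and cont: "\<And>h. continuous_on UNIV (\<lambda>z. frechet_derivative k (at z) h)"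
  shows "((\<lambda>y. integral {a..b} (\<lambda>t. k (y + t *\<^sub>R w))) has_derivative
           (\<lambda>h. integral {a..b} (\<lambda>t. frechet_derivative k (at (x + t *\<^sub>R w)) h))) (at x)"
proof -
  define Dk where "Dk y t = Blinfun (frechet_derivative k (at (y + t *\<^sub>R w)))" for y t
  have Dk_apply: "blinfun_apply (Dk y t) = frechet_derivative k (at (y + t *\<^sub>R w))" for y t
    unfolding Dk_def using diff
    by (metis bounded_linear_Blinfun_apply frechet_derivative_works has_derivative_bounded_linear)
  have cont_k: "continuous_on UNIV k"
    by (meson diff continuous_at_imp_continuous_on differentiable_imp_continuous_within)
  have cont_ray: "continuous_on S (\<lambda>t. g (y + t *\<^sub>R w))" if "continuous_on UNIV g" for g :: "'a \<Rightarrow> 'c::real_normed_vector" and S y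
    by (rule continuous_on_compose2[OF that]) (auto intro!: continuous_intros)
  have cont_Dk: "continuous_on (UNIV \<times> cbox a b) (\<lambda>(y, t). Dk y t)"
  proof (rule continuous_on_blinfun_componentwise)
    fix h
    have "continuous_on (UNIV \<times> cbox a b) (\<lambda>p. frechet_derivative k (at (fst p + snd p *\<^sub>R w)) h)"
      by (rule continuous_on_compose2[OF cont[of h]]) (auto intro!: continuous_intros)
    then show "continuous_on (UNIV \<times> cbox a b) (\<lambda>p. blinfun_apply (case p of (y, t) \<Rightarrow> Dk y t) h)"
      by (simp add: Dk_apply case_prod_beta)
  qed
  have cont_Dk_x: "continuous_on (cbox a b) (Dk x)"
    by (rule continuous_on_blinfun_componentwise) (simp add: Dk_apply cont_ray[OF cont])
  have "((\<lambda>y. integral (cbox a b) (\<lambda>t. k (y + t *\<^sub>R w))) has_derivative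
          blinfun_apply (integral (cbox a b) (Dk x))) (at x within UNIV)"
  proof (rule leibniz_rule[OF _ _ cont_Dk])
    show "((\<lambda>y. k (y + t *\<^sub>R w)) has_derivative blinfun_apply (Dk y t)) (at y within UNIV)" for y t
      unfolding Dk_apply using diff by (rule has_derivative_shift)
    show "(\<lambda>t. k (y + t *\<^sub>R w)) integrable_on cbox a b" for y
      by (rule integrable_continuous, rule cont_ray[OF cont_k])
  qed auto
  moreover have "blinfun_apply (integral (cbox a b) (Dk x))
      = (\<lambda>h. integral {a..b} (\<lambda>t. frechet_derivative k (at (x + t *\<^sub>R w)) h))"
    using blinfun_apply_integral[OF integrable_continuous[OF cont_Dk_x]] by (simp add: Dk_apply fun_eq_iff)
  ultimately show ?thesis
    by simp
qed

lemma has_derivative_ray_transform: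
  fixes k :: "'a::euclidean_space \<Rightarrow> 'b::banach"
  assumes k: "compactly_supported_C1 k" and w: "w \<noteq> 0"
  shows "(ray_transform k w has_derivative
           (\<lambda>h. ray_transform (\<lambda>z. frechet_derivative k (at z) h) w x)) (at x)"
proof -
  obtain R where R: "0 \<le> R"
    "\<And>y t. y \<in> ball x 1 \<Longrightarrow> R \<le> t \<Longrightarrow> k (y + t *\<^sub>R w) = 0"
    "\<And>y t. y \<in> ball x 1 \<Longrightarrow> R \<le> t \<Longrightarrow> frechet_derivative k (at (y + t *\<^sub>R w)) = (\<lambda>_. 0)"
    using compactly_supported_C1_ray_vanishes[OF k w] by blast
  have "integral {0..R} (\<lambda>t. frechet_derivative k (at (x + t *\<^sub>R w)) h)
      = ray_transform (\<lambda>z. frechet_derivative k (at z) h) w x" for h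
    unfolding ray_transform_def
    by (rule integral_atLeast_eq_atLeastAtMost[symmetric]) (use R in auto)
  moreover have "((\<lambda>y. integral {0..R} (\<lambda>t. k (y + t *\<^sub>R w))) has_derivative
          (\<lambda>h. integral {0..R} (\<lambda>t. frechet_derivative k (at (x + t *\<^sub>R w)) h))) (at x)"
    using k unfolding compactly_supported_C1_def by (intro has_derivative_integral_along_rays) auto
  ultimately have D: "((\<lambda>y. integral {0..R} (\<lambda>t. k (y + t *\<^sub>R w))) has_derivative
          (\<lambda>h. ray_transform (\<lambda>z. frechet_derivative k (at z) h) w x)) (at x)"
    by simp
  have "integral {0..R} (\<lambda>t. k (y + t *\<^sub>R w)) = ray_transform k w y" if "y \<in> ball x 1" for y
    unfolding ray_transform_def
    by (rule integral_atLeast_eq_atLeastAtMost[symmetric]) (use R that in auto)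
  then show ?thesis
    by (intro has_derivative_transform_within_open[OF D, of "ball x 1"]) auto
qed

lemma ray_transform_derivative_along_ray:
  fixes k :: "'a::euclidean_space \<Rightarrow> 'b::banach"
  assumes k: "compactly_supported_C1 k" and w: "w \<noteq> 0"
  shows "ray_transform (\<lambda>z. frechet_derivative k (at z) w) w x = - k x"
proof -
  obtain R where R: "0 \<le> R"
    "\<And>y t. y \<in> ball x 1 \<Longrightarrow> R \<le> t \<Longrightarrow> k (y + t *\<^sub>R w) = 0"
    "\<And>y t. y \<in> ball x 1 \<Longrightarrow> R \<le> t \<Longrightarrow> frechet_derivative k (at (y + t *\<^sub>R w)) = (\<lambda>_. 0)"
    using compactly_supported_C1_ray_vanishes[OF k w] by blast
  have "((\<lambda>t. frechet_derivative k (at (x + t *\<^sub>R w)) w) has_integral k (x + R *\<^sub>R w) - k (x + 0 *\<^sub>R w)) {0..R}"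
    using k unfolding compactly_supported_C1_def
    by (intro fundamental_theorem_of_calculus[OF R(1)] has_vector_derivative_along_line) auto
  then have "integral {0..R} (\<lambda>t. frechet_derivative k (at (x + t *\<^sub>R w)) w) = - k x"
    using R(2)[of x R] by (simp add: integral_unique)
  moreover have "ray_transform (\<lambda>z. frechet_derivative k (at z) w) w x
      = integral {0..R} (\<lambda>t. frechet_derivative k (at (x + t *\<^sub>R w)) w)"
    unfolding ray_transform_def
    by (rule integral_atLeast_eq_atLeastAtMost) (use R in auto)
  ultimately show ?thesis
    by simp
qed

lemma frechet_derivative_inner_right:
  assumes "g differentiable (at z)"
  shows "frechet_derivative (\<lambda>y. p \<bullet> g y) (at z) h = p \<bullet> frechet_derivative g (at z) h"
  using has_derivative_inner_right[OF frechet_derivative_works[THEN iffD1, OF assms], of p]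
  by (metis frechet_derivative_at)

lemma compactly_supported_C1_inner_right:
  fixes g :: "'a::euclidean_space \<Rightarrow> 'b::real_inner"
  assumes g: "compactly_supported_C1 g"
  shows "compactly_supported_C1 (\<lambda>z. p \<bullet> g z)"
  unfolding compactly_supported_C1_def
proof (intro conjI allI)
  have diff: "g differentiable (at z)" for z
    using g unfolding compactly_supported_C1_def by blast
  show "(\<lambda>z. p \<bullet> g z) differentiable (at z)" for z
    using diff has_derivative_inner_right by (metis differentiable_def frechet_derivative_works)
  show "continuous_on UNIV (\<lambda>z. frechet_derivative (\<lambda>z. p \<bullet> g z) (at z) h)" for h
    using g unfolding compactly_supported_C1_def frechet_derivative_inner_right[OF diff]
    by (intro continuous_intros) auto
  show "bounded {z. p \<bullet> g z \<noteq> 0}"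
    using g unfolding compactly_supported_C1_def by (rule bounded_subset[OF conjunct2[OF conjunct2]]) auto
qed

lemma Cc2_disc_compactly_supported_C1:
  assumes "Cc2_disc f"
  shows "compactly_supported_C1 f" and "compactly_supported_C1 (\<lambda>z. frechet_derivative f (at z) w)"
proof -
  obtain K where K: "compact K" "\<And>x. x \<notin> K \<Longrightarrow> f x = 0"
    using assms unfolding Cc2_disc_def by blast
  have C2: "C2_field f"
    using assms unfolding Cc2_disc_def by blast
  have "frechet_derivative f (at z) = (\<lambda>_. 0)" if "z \<notin> K" for z
    using K that by (intro frechet_derivative_locally_zero[of "- K"]) (auto intro: compact_imp_closed)
  then have supp: "{z. f z \<noteq> 0} \<subseteq> K" "{z. frechet_derivative f (at z) w \<noteq> 0} \<subseteq> K"
    using K(2) by fastforce+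
  have Df_cont: "continuous_on UNIV (\<lambda>z. frechet_derivative f (at z) h)" for h
    using C2 unfolding C2_field_def
    by (meson continuous_at_imp_continuous_on differentiable_imp_continuous_within)
  show "compactly_supported_C1 f"
    using C2 Df_cont bounded_subset[OF compact_imp_bounded[OF K(1)] supp(1)]
    unfolding compactly_supported_C1_def C2_field_def by blast
  show "compactly_supported_C1 (\<lambda>z. frechet_derivative f (at z) w)"
    using C2 bounded_subset[OF compact_imp_bounded[OF K(1)] supp(2)]
    unfolding compactly_supported_C1_def C2_field_def by blast
qed

lemma dirD_eqI:
  assumes "(g has_derivative g') (at x)"
  shows "dirD h g x = g' h"
  using assms unfolding dirD_def by (metis frechet_derivative_at)

lemma dirD_dirD_V_line_transform:
  fixes f :: "real^2 \<Rightarrow> real^2"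
  assumes f: "Cc2_disc f" and u: "u \<noteq> 0" and v: "v \<noteq> 0"
  shows "dirD u (dirD v (\<lambda>x. - ray_transform (\<lambda>z. p \<bullet> f z) u x + \<alpha> * ray_transform (\<lambda>z. q \<bullet> f z) v x)) x
     = p \<bullet> frechet_derivative f (at x) v - \<alpha> * (q \<bullet> frechet_derivative f (at x) u)"
proof -
  note C1_f = Cc2_disc_compactly_supported_C1(1)[OF f]
  note C1_Df = Cc2_disc_compactly_supported_C1(2)[OF f, of v]
  have diff_f: "f differentiable (at z)" for z
    using C1_f unfolding compactly_supported_C1_def by blast
  define g where "g = (\<lambda>z. p \<bullet> frechet_derivative f (at z) v)"
  have inner_step: "dirD v (\<lambda>x. - ray_transform (\<lambda>z. p \<bullet> f z) u x + \<alpha> * ray_transform (\<lambda>z. q \<bullet> f z) v x)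
      = (\<lambda>y. - ray_transform g u y - \<alpha> * (q \<bullet> f y))"
  proof
    fix y
    have "((\<lambda>x. - ray_transform (\<lambda>z. p \<bullet> f z) u x + \<alpha> * ray_transform (\<lambda>z. q \<bullet> f z) v x) has_derivative
        (\<lambda>h. - ray_transform (\<lambda>z. frechet_derivative (\<lambda>z. p \<bullet> f z) (at z) h) u y
             + \<alpha> * ray_transform (\<lambda>z. frechet_derivative (\<lambda>z. q \<bullet> f z) (at z) h) v y)) (at y)"
      by (intro has_derivative_add has_derivative_minus has_derivative_mult_right
          has_derivative_ray_transform compactly_supported_C1_inner_right C1_f u v)
    then have "dirD v (\<lambda>x. - ray_transform (\<lambda>z. p \<bullet> f z) u x + \<alpha> * ray_transform (\<lambda>z. q \<bullet> f z) v x) y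
        = - ray_transform (\<lambda>z. frechet_derivative (\<lambda>z. p \<bullet> f z) (at z) v) u y
          + \<alpha> * ray_transform (\<lambda>z. frechet_derivative (\<lambda>z. q \<bullet> f z) (at z) v) v y"
      by (rule dirD_eqI)
    also have "\<dots> = - ray_transform g u y - \<alpha> * (q \<bullet> f y)"
      using ray_transform_derivative_along_ray[OF compactly_supported_C1_inner_right[OF C1_f] v]
      by (simp add: g_def frechet_derivative_inner_right[OF diff_f])
    finally show "dirD v (\<lambda>x. - ray_transform (\<lambda>z. p \<bullet> f z) u x + \<alpha> * ray_transform (\<lambda>z. q \<bullet> f z) v x) y
        = - ray_transform g u y - \<alpha> * (q \<bullet> f y)" .
  qed
  have "((\<lambda>y. - ray_transform g u y - \<alpha> * (q \<bullet> f y)) has_derivative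
      (\<lambda>h. - ray_transform (\<lambda>z. frechet_derivative g (at z) h) u x
           - \<alpha> * (q \<bullet> frechet_derivative f (at x) h))) (at x)"
    unfolding g_def
    by (intro has_derivative_diff has_derivative_minus has_derivative_mult_right
        has_derivative_ray_transform compactly_supported_C1_inner_right C1_Df u
        has_derivative_inner_right frechet_derivative_works[THEN iffD1] diff_f)
  then have "dirD u (\<lambda>y. - ray_transform g u y - \<alpha> * (q \<bullet> f y)) x
      = - ray_transform (\<lambda>z. frechet_derivative g (at z) u) u x - \<alpha> * (q \<bullet> frechet_derivative f (at x) u)"
    by (rule dirD_eqI)
  then show ?thesis
    unfolding inner_step
    using ray_transform_derivative_along_ray[OF compactly_supported_C1_inner_right[OF C1_Df] u]
    by (simp add: g_def)
qed

lemma pd_component: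
  fixes f :: "real^2 \<Rightarrow> real^2"
  assumes "f differentiable (at x)"
  shows "pd i (\<lambda>y. f y $ j) x = frechet_derivative f (at x) (axis i 1) $ j"
proof -
  have "(f has_derivative frechet_derivative f (at x)) (at x)"
    using assms frechet_derivative_works by blast
  from bounded_linear.has_derivative[OF bounded_linear_vec_nth this, of j]
  show ?thesis
    unfolding pd_def by (metis frechet_derivative_at)
qed

lemma frechet_derivative_component_expansion:
  fixes f :: "real^2 \<Rightarrow> real^2"
  assumes "f differentiable (at x)"
  shows "frechet_derivative f (at x) h $ j = h$1 * pd 1 (\<lambda>y. f y $ j) x + h$2 * pd 2 (\<lambda>y. f y $ j) x"
proof -
  have lin: "linear (frechet_derivative f (at x))"
    using assms frechet_derivative_works has_derivative_linear by blast
  have "h = h$1 *\<^sub>R axis 1 1 + h$2 *\<^sub>R axis 2 1"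
    by (simp add: vec_eq_iff forall_2 axis_def)
  then have "frechet_derivative f (at x) h
      = h$1 *\<^sub>R frechet_derivative f (at x) (axis 1 1) + h$2 *\<^sub>R frechet_derivative f (at x) (axis 2 1)"
    by (metis linear_add[OF lin] linear_scale[OF lin])
  then show ?thesis
    by (simp add: pd_component[OF assms])
qed

theorem lemma7p1:
  fixes \<alpha> :: real and u v :: "real^2" and f :: "real^2 \<Rightarrow> real^2"
  assumes "\<alpha> \<noteq> 0"
    and "norm u = 1" and "u$1 * u$2 \<noteq> 0"
    and "v = vector [- (u$1), u$2]"
    and "Cc2_disc f"
  shows "\<forall>x. dirD u (dirD v (Lalpha \<alpha> u v f)) x
               = dt1 \<alpha> u (\<lambda>y. f y $ 2) x - dt2 \<alpha> u (\<lambda>y. f y $ 1) x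
           \<and> dt1 \<alpha> u (\<lambda>y. f y $ 2) x - dt2 \<alpha> u (\<lambda>y. f y $ 1) x = tdelta_perp \<alpha> u f x
           \<and> dirD u (dirD v (Talpha \<alpha> u v f)) x
               = - (dt1 \<alpha> u (\<lambda>y. f y $ 1) x + dt2 \<alpha> u (\<lambda>y. f y $ 2) x)
           \<and> - (dt1 \<alpha> u (\<lambda>y. f y $ 1) x + dt2 \<alpha> u (\<lambda>y. f y $ 2) x) = - tdelta \<alpha> u f x"
proof -
  have v1: "v$1 = - u$1" and v2: "v$2 = u$2"
    using assms(4) by simp_all
  have "u \<noteq> 0" "v \<noteq> 0"
    using assms(3) v2 by auto
  note second_derivative = dirD_dirD_V_line_transform[OF assms(5) this]
  have "Lalpha \<alpha> u v f = (\<lambda>x. - ray_transform (\<lambda>z. u \<bullet> f z) u x + \<alpha> * ray_transform (\<lambda>z. v \<bullet> f z) v x)"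
    and "Talpha \<alpha> u v f = (\<lambda>x. - ray_transform (\<lambda>z. perp u \<bullet> f z) u x + \<alpha> * ray_transform (\<lambda>z. perp v \<bullet> f z) v x)"
    by (simp_all add: fun_eq_iff Lalpha_def Talpha_def ray_transform_def)
  then have "dirD u (dirD v (Lalpha \<alpha> u v f)) x
      = u \<bullet> frechet_derivative f (at x) v - \<alpha> * (v \<bullet> frechet_derivative f (at x) u)"
    and "dirD u (dirD v (Talpha \<alpha> u v f)) x
      = perp u \<bullet> frechet_derivative f (at x) v - \<alpha> * (perp v \<bullet> frechet_derivative f (at x) u)" for x
    by (simp_all only: second_derivative)
  moreover have "f differentiable (at x)" for x
    using assms(5) unfolding Cc2_disc_def C2_field_def by blast
  moreover have "a \<bullet> b = a$1 * b$1 + a$2 * b$2" for a b :: "real^2"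
    by (simp add: inner_vec_def sum_2)
  ultimately show ?thesis
    by (simp add: frechet_derivative_component_expansion perp_def v1 v2
        dt1_def dt2_def tdelta_def tdelta_perp_def power2_eq_square algebra_simps)
qed

end
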